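(* Let $(X,\{\tau_n:n<\omega\})$ be a GLP-space in which the topologies are $T_3$, and let $n<\omega$. For any $A,B\subseteq X$: $A\vdash_n B$ if and only if $c_n(A)\subseteq c_n(B)$ or $B\not\subseteq d_n(X)$.
   Context: For a topology $\tau_n$ on $X$, $d_n(A)$ denotes the set of limit points of $A\subseteq X$ (the derivative) and $c_n(A)$ the closure of $A$ with respect to $\tau_n$. A GLP-space is a nonempty set $X$ with topologies $\tau_n$, $n<\omega$, such that the powerset boolean algebra $({\mathcal P}(X),\{d_n\})$ is a GLP-algebra, i.e. for all $n$, all $m<n$ and all $x,y\subseteq X$: $d_n(x\cup y)=d_n(x)\cup d_n(y)$; $d_n(\emptyset)=\emptyset$; $d_n(x)=d_n(x\setminus d_n(x))$; $d_n(x)\subseteq d_m(x)$; $d_m(x)\subseteq X\setminus d_n(X\setminus d_m(x))$. For $A,B\subseteq X$, $A\vdash_n B$ means: for every $Z\subseteq X$, if $B\subseteq d_n(Z)$ then $A\subseteq d_n(Z)$. *)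

theory Defs
  imports "HOL-Analysis.Analysis"
begin

definition dn :: "(nat \<Rightarrow> 'a topology) \<Rightarrow> nat \<Rightarrow> 'a set \<Rightarrow> 'a set" where
  "dn \<tau> n A = (\<tau> n) derived_set_of A"

definition cn :: "(nat \<Rightarrow> 'a topology) \<Rightarrow> nat \<Rightarrow> 'a set \<Rightarrow> 'a set" where
  "cn \<tau> n A = (\<tau> n) closure_of A"

text \<open>GLP-space: nonempty X with topologies tau_n on X such that (P(X), d_n) is a GLP-algebra.\<close>
definition GLP_space :: "'a set \<Rightarrow> (nat \<Rightarrow> 'a topology) \<Rightarrow> bool" where
  "GLP_space X \<tau> \<longleftrightarrow> X \<noteq> {} \<and> (\<forall>n. topspace (\<tau> n) = X) \<and>
     (\<forall>n x y. x \<subseteq> X \<and> y \<subseteq> X \<longrightarrow>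
        dn \<tau> n (x \<union> y) = dn \<tau> n x \<union> dn \<tau> n y \<and>
        dn \<tau> n {} = {} \<and>
        dn \<tau> n x = dn \<tau> n (x - dn \<tau> n x) \<and>
        (\<forall>m<n. dn \<tau> n x \<subseteq> dn \<tau> m x \<and>
                dn \<tau> m x \<subseteq> X - dn \<tau> n (X - dn \<tau> m x)))"

definition T3_space :: "'a topology \<Rightarrow> bool" where
  "T3_space T \<longleftrightarrow> regular_space T \<and> t1_space T"

definition entails_n :: "'a set \<Rightarrow> (nat \<Rightarrow> 'a topology) \<Rightarrow> nat \<Rightarrow> 'a set \<Rightarrow> 'a set \<Rightarrow> bool" where
  "entails_n X \<tau> n A B \<longleftrightarrow> (\<forall>Z. Z \<subseteq> X \<longrightarrow> B \<subseteq> dn \<tau> n Z \<longrightarrow> A \<subseteq> dn \<tau> n Z)"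

end

theory Submission
  imports Defs
begin

text \<open>Only the n-th topology matters. If no point of B is
isolated, then B lies in the derived set of every open set containing it. So when a point a of A
lies outside the closure of B, regularity separates a from the closure of B by disjoint open sets
U and V, and Z = V witnesses that A does not entail B, since a has the neighbourhood U missing V.
Conversely, in a T1 space derived sets are closed, hence contain the closure of B as soon as
they contain B.\<close>

definition derived_entails :: "'a topology \<Rightarrow> 'a set \<Rightarrow> 'a set \<Rightarrow> bool" where
  "derived_entails T A B \<longleftrightarrow>
     (\<forall>Z. Z \<subseteq> topspace T \<longrightarrow> B \<subseteq> T derived_set_of Z \<longrightarrow> A \<subseteq> T derived_set_of Z)"

lemma entails_n_iff_derived_entails:
  assumes "topspace (\<tau> n) = X"
  shows "entails_n X \<tau> n A B \<longleftrightarrow> derived_entails (\<tau> n) A B"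
  using assms by (simp add: entails_n_def derived_entails_def dn_def)

lemma derived_set_of_open_superset:
  assumes "openin T V" and "B \<subseteq> V" and "B \<subseteq> T derived_set_of topspace T"
  shows "B \<subseteq> T derived_set_of V"
proof -
  have "V \<inter> T derived_set_of topspace T \<subseteq> T derived_set_of V"
    using openin_Int_derived_set_of_subset[OF assms(1), of "topspace T"] openin_subset[OF assms(1)]
    by (simp add: Int_absorb2)
  with assms(2,3) show ?thesis by blast
qed

lemma derived_entails_imp_closure_subset:
  assumes "regular_space T" and "derived_entails T A B"
    and B: "B \<subseteq> T derived_set_of topspace T"
  shows "T closure_of A \<subseteq> T closure_of B"
proof (rule closure_of_minimal)
  show "closedin T (T closure_of B)" by simp
  show "A \<subseteq> T closure_of B"
  proof
    fix a assume "a \<in> A"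
    show "a \<in> T closure_of B"
    proof (rule ccontr)
      assume a_notin: "a \<notin> T closure_of B"
      have "A \<subseteq> T derived_set_of topspace T"
        using assms(2) B unfolding derived_entails_def by blast
      with \<open>a \<in> A\<close> have "a \<in> topspace T"
        using derived_set_of_subset_topspace by (metis subsetD)
      with a_notin have "a \<in> topspace T - T closure_of B" by blast
      then obtain U V where "openin T U" "openin T V" "a \<in> U"
        and closure_in_V: "T closure_of B \<subseteq> V" and "disjnt U V"
        using assms(1) closedin_closure_of unfolding regular_space_def by metis
      have "B \<subseteq> V"
        using closure_in_V closure_of_subset[of B T] B derived_set_of_subset_topspace[of T]
        by blast
      then have "B \<subseteq> T derived_set_of V"
        using derived_set_of_open_superset[OF \<open>openin T V\<close> _ B] by blast
      then have "a \<in> T derived_set_of V"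
        using assms(2) \<open>a \<in> A\<close> openin_subset[OF \<open>openin T V\<close>]
        unfolding derived_entails_def by blast
      then obtain y where "y \<in> U" "y \<in> V"
        using \<open>openin T U\<close> \<open>a \<in> U\<close> unfolding in_derived_set_of by blast
      with \<open>disjnt U V\<close> show False by (simp add: disjnt_iff)
    qed
  qed
qed

lemma closure_subset_imp_derived_entails:
  assumes "t1_space T" and "A \<subseteq> topspace T"
    and "T closure_of A \<subseteq> T closure_of B"
  shows "derived_entails T A B"
  unfolding derived_entails_def
proof (intro allI impI)
  fix Z assume "B \<subseteq> T derived_set_of Z"
  then have "T closure_of B \<subseteq> T derived_set_of Z"
    by (simp add: closure_of_minimal closedin_derived_set_of_gen[OF assms(1)])
  then show "A \<subseteq> T derived_set_of Z"
    using assms(2,3) closure_of_subset by blast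
qed

lemma derived_entails_iff:
  assumes "regular_space T" and "t1_space T" and "A \<subseteq> topspace T"
  shows "derived_entails T A B \<longleftrightarrow>
           T closure_of A \<subseteq> T closure_of B \<or> \<not> B \<subseteq> T derived_set_of topspace T"
proof
  assume "derived_entails T A B"
  then show "T closure_of A \<subseteq> T closure_of B \<or> \<not> B \<subseteq> T derived_set_of topspace T"
    using derived_entails_imp_closure_subset[OF assms(1)] by blast
next
  assume "T closure_of A \<subseteq> T closure_of B \<or> \<not> B \<subseteq> T derived_set_of topspace T"
  then show "derived_entails T A B"
  proof
    assume "\<not> B \<subseteq> T derived_set_of topspace T"
    then show ?thesis
      unfolding derived_entails_def by (meson derived_set_of_mono subset_trans)
  qed (rule closure_subset_imp_derived_entails[OF assms(2,3)])
qed

theorem mainTheorem5: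
  fixes X :: "'a set" and \<tau> :: "nat \<Rightarrow> 'a topology" and n :: nat and A B :: "'a set"
  assumes "GLP_space X \<tau>"
    and "\<forall>k. T3_space (\<tau> k)"
    and "A \<subseteq> X" and "B \<subseteq> X"
  shows "entails_n X \<tau> n A B \<longleftrightarrow> (cn \<tau> n A \<subseteq> cn \<tau> n B \<or> \<not> B \<subseteq> dn \<tau> n X)"
proof -
  have topspace: "topspace (\<tau> n) = X"
    using assms(1) unfolding GLP_space_def by blast
  have "regular_space (\<tau> n)" and "t1_space (\<tau> n)"
    using assms(2) unfolding T3_space_def by auto
  then show ?thesis
    using derived_entails_iff[of "\<tau> n" A B] assms(3) topspace
    by (simp add: entails_n_iff_derived_entails cn_def dn_def)
qed

end
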